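(* Let $X$ be a finitely supported subset of an invariant set such that $\wp_{fs}(X)$ is not FSM Dedekind infinite. Then every finitely supported surjective map $f:X\to X$ is injective.
   Context: Framework (FSM). Work in ZF with a fixed infinite set $A$ of atoms; $S_A$ is the group of bijections of $A$ fixing all but finitely many atoms; $Fix(S)$ is the set of $\pi\in S_A$ fixing each element of $S\subseteq A$; $S$ supports $x$ if $\pi\cdot x=x$ for all $\pi\in Fix(S)$. An invariant set is an $S_A$-set all of whose elements have finite supports; subsets carry $\pi\star Z=\{\pi\cdot z:z\in Z\}$; $\wp_{fs}(X)$ is the set of finitely supported subsets (under $\star$) of the ambient invariant set contained in $X$. A function is finitely supported if there is a finite $S$ such that for all $\pi\in Fix(S)$, $\pi$ preserves domain and codomain and $f(\pi\cdot x)=\pi\cdot f(x)$. A set $Z$ is FSM Dedekind infinite if there is a finitely supported injection from $Z$ onto a finitely supported proper subset of $Z$. *)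

theory Defs
  imports Main
begin

text \<open>Atoms: the (infinite) universe of a type variable 'atom.
  S_A: bijections of the atoms moving only finitely many atoms.\<close>

definition perm_A :: "('atom \<Rightarrow> 'atom) \<Rightarrow> bool" where
  "perm_A \<pi> \<longleftrightarrow> bij \<pi> \<and> finite {a. \<pi> a \<noteq> a}"

definition fixes_all :: "('atom \<Rightarrow> 'atom) \<Rightarrow> 'atom set \<Rightarrow> bool" where
  "fixes_all \<pi> S \<longleftrightarrow> perm_A \<pi> \<and> (\<forall>a\<in>S. \<pi> a = a)"

definition supports :: "(('atom \<Rightarrow> 'atom) \<Rightarrow> 'x \<Rightarrow> 'x) \<Rightarrow> 'atom set \<Rightarrow> 'x \<Rightarrow> bool" where
  "supports act S x \<longleftrightarrow> (\<forall>\<pi>. fixes_all \<pi> S \<longrightarrow> act \<pi> x = x)"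

definition fin_supp :: "(('atom \<Rightarrow> 'atom) \<Rightarrow> 'x \<Rightarrow> 'x) \<Rightarrow> 'x \<Rightarrow> bool" where
  "fin_supp act x \<longleftrightarrow> (\<exists>S. finite S \<and> supports act S x)"

definition invariant_set :: "'x set \<Rightarrow> (('atom \<Rightarrow> 'atom) \<Rightarrow> 'x \<Rightarrow> 'x) \<Rightarrow> bool" where
  "invariant_set U act \<longleftrightarrow>
     (\<forall>x\<in>U. act id x = x) \<and>
     (\<forall>\<pi> \<sigma> x. perm_A \<pi> \<longrightarrow> perm_A \<sigma> \<longrightarrow> x \<in> U \<longrightarrow> act (\<pi> \<circ> \<sigma>) x = act \<pi> (act \<sigma> x)) \<and>
     (\<forall>\<pi> x. perm_A \<pi> \<longrightarrow> x \<in> U \<longrightarrow> act \<pi> x \<in> U) \<and>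
     (\<forall>x\<in>U. fin_supp act x)"

definition set_act :: "(('atom \<Rightarrow> 'atom) \<Rightarrow> 'x \<Rightarrow> 'x) \<Rightarrow> ('atom \<Rightarrow> 'atom) \<Rightarrow> 'x set \<Rightarrow> 'x set" where
  "set_act act \<pi> Z = act \<pi> ` Z"

definition Pow_fs :: "(('atom \<Rightarrow> 'atom) \<Rightarrow> 'x \<Rightarrow> 'x) \<Rightarrow> 'x set \<Rightarrow> 'x set set" where
  "Pow_fs act X = {Z. Z \<subseteq> X \<and> fin_supp (set_act act) Z}"

definition fs_map :: "(('atom \<Rightarrow> 'atom) \<Rightarrow> 'x \<Rightarrow> 'x) \<Rightarrow> (('atom \<Rightarrow> 'atom) \<Rightarrow> 'y \<Rightarrow> 'y)
    \<Rightarrow> 'x set \<Rightarrow> 'y set \<Rightarrow> ('x \<Rightarrow> 'y) \<Rightarrow> bool" where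
  "fs_map act1 act2 D C f \<longleftrightarrow>
     (\<exists>S. finite S \<and> (\<forall>\<pi>. fixes_all \<pi> S \<longrightarrow>
        set_act act1 \<pi> D = D \<and> set_act act2 \<pi> C = C \<and>
        (\<forall>x\<in>D. f (act1 \<pi> x) = act2 \<pi> (f x))))"

definition fsm_dedekind_infinite :: "(('atom \<Rightarrow> 'atom) \<Rightarrow> 'x \<Rightarrow> 'x) \<Rightarrow> 'x set \<Rightarrow> bool" where
  "fsm_dedekind_infinite act Z \<longleftrightarrow>
     (\<exists>g Y. Y \<subset> Z \<and> fin_supp (set_act act) Y \<and> bij_betw g Z Y \<and> fs_map act act Z Y g)"

end

theory Submission
  imports Defs
begin

text \<open>If f maps X onto X without being injective, the preimage map Z \<mapsto> X \<inter> f -` Z is an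
  injection of \<wp>_fs(X) into itself (surjectivity makes f ` (X \<inter> f -` Z) = Z), it is
  finitely supported because f is, and it misses every singleton {x} with f x = f y for
  some y \<noteq> x. Hence \<wp>_fs(X) would be FSM Dedekind infinite.\<close>

lemma perm_A_inv: "perm_A \<pi> \<Longrightarrow> perm_A (inv \<pi>)"
proof -
  assume "perm_A \<pi>"
  hence b: "bij \<pi>" and fin: "finite {a. \<pi> a \<noteq> a}" by (auto simp: perm_A_def)
  have "{a. inv \<pi> a \<noteq> a} = {a. \<pi> a \<noteq> a}"
    using b by (metis bij_inv_eq_iff)
  thus ?thesis using b fin by (simp add: perm_A_def bij_imp_bij_inv)
qed

lemma perm_A_comp: "perm_A \<pi> \<Longrightarrow> perm_A \<sigma> \<Longrightarrow> perm_A (\<pi> \<circ> \<sigma>)"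
proof -
  assume "perm_A \<pi>" "perm_A \<sigma>"
  moreover have "{a. (\<pi> \<circ> \<sigma>) a \<noteq> a} \<subseteq> {a. \<sigma> a \<noteq> a} \<union> {a. \<pi> a \<noteq> a}" by auto
  ultimately show ?thesis by (auto simp: perm_A_def intro: bij_comp finite_subset)
qed

lemma fixes_all_subset: "fixes_all \<pi> T \<Longrightarrow> S \<subseteq> T \<Longrightarrow> fixes_all \<pi> S"
  unfolding fixes_all_def by auto

lemma invariant_set_act_comp:
  "invariant_set U act \<Longrightarrow> perm_A \<pi> \<Longrightarrow> perm_A \<sigma> \<Longrightarrow> x \<in> U \<Longrightarrow>
    act (\<pi> \<circ> \<sigma>) x = act \<pi> (act \<sigma> x)"
  unfolding invariant_set_def by blast

lemma invariant_set_act_inv: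
  assumes inv: "invariant_set U act" and p: "perm_A \<pi>" and x: "x \<in> U"
  shows "act (inv \<pi>) (act \<pi> x) = x" and "act \<pi> (act (inv \<pi>) x) = x"
proof -
  have b: "bij \<pi>" using p by (simp add: perm_A_def)
  have id: "act id x = x" using inv x unfolding invariant_set_def by blast
  have "act (inv \<pi>) (act \<pi> x) = act (inv \<pi> \<circ> \<pi>) x"
    by (rule invariant_set_act_comp[OF inv perm_A_inv[OF p] p x, symmetric])
  also have "\<dots> = act id x" using b by (simp add: bij_is_inj)
  finally show "act (inv \<pi>) (act \<pi> x) = x" using id by simp
  have "act \<pi> (act (inv \<pi>) x) = act (\<pi> \<circ> inv \<pi>) x"
    by (rule invariant_set_act_comp[OF inv p perm_A_inv[OF p] x, symmetric])
  also have "\<dots> = act id x" by (simp add: surj_iff[THEN iffD1, OF bij_is_surj[OF b]])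
  finally show "act \<pi> (act (inv \<pi>) x) = x" using id by simp
qed

lemma invariant_set_inj_on_act: "invariant_set U act \<Longrightarrow> perm_A \<pi> \<Longrightarrow> inj_on (act \<pi>) U"
  by (rule inj_on_inverseI[where g="act (inv \<pi>)"]) (rule invariant_set_act_inv(1))

lemma set_act_comp:
  assumes inv: "invariant_set U act" and p: "perm_A \<pi>" "perm_A \<sigma>" and ZU: "Z \<subseteq> U"
  shows "set_act act (\<pi> \<circ> \<sigma>) Z = set_act act \<pi> (set_act act \<sigma> Z)"
  unfolding set_act_def image_image
  by (rule image_cong[OF refl], rule invariant_set_act_comp[OF inv p subsetD[OF ZU]])

lemma set_act_act_inv:
  assumes inv: "invariant_set U act" and p: "perm_A \<pi>" and ZU: "Z \<subseteq> U"
  shows "set_act act \<pi> (set_act act (inv \<pi>) Z) = Z"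
proof -
  have "set_act act \<pi> (set_act act (inv \<pi>) Z) = (\<lambda>z. z) ` Z"
    unfolding set_act_def image_image
    by (rule image_cong[OF refl], rule invariant_set_act_inv(2)[OF inv p subsetD[OF ZU]])
  thus ?thesis by simp
qed

lemma set_act_inv_stable:
  assumes "invariant_set U act" "perm_A \<pi>" "X \<subseteq> U" "set_act act \<pi> X = X"
  shows "set_act act (inv \<pi>) X = X"
proof -
  have "act (inv \<pi>) ` act \<pi> ` X = X"
    using invariant_set_act_inv(1)[OF assms(1,2)] assms(3) by (force simp: image_image)
  thus ?thesis using assms(4) by (simp add: set_act_def)
qed

lemma supports_act_perm:
  assumes comp: "\<And>\<pi> \<sigma>. perm_A \<pi> \<Longrightarrow> perm_A \<sigma> \<Longrightarrow> act (\<pi> \<circ> \<sigma>) x = act \<pi> (act \<sigma> x)"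
    and p: "perm_A \<pi>" and S: "supports act S x"
  shows "supports act (\<pi> ` S) (act \<pi> x)"
  unfolding supports_def
proof (intro allI impI)
  fix \<sigma> assume fix\<sigma>: "fixes_all \<sigma> (\<pi> ` S)"
  define \<tau> where "\<tau> = inv \<pi> \<circ> \<sigma> \<circ> \<pi>"
  have b: "bij \<pi>" using p by (simp add: perm_A_def)
  have p\<sigma>: "perm_A \<sigma>" using fix\<sigma> by (simp add: fixes_all_def)
  hence p\<tau>: "perm_A \<tau>" unfolding \<tau>_def using perm_A_comp perm_A_inv p by metis
  hence "fixes_all \<tau> S"
    using fix\<sigma> b unfolding fixes_all_def \<tau>_def by (simp add: bij_is_inj)
  hence "act \<tau> x = x" using S by (simp add: supports_def)
  have "\<pi> \<circ> \<tau> = \<sigma> \<circ> \<pi>" unfolding \<tau>_def using b by (auto simp: fun_eq_iff bij_is_surj surj_f_inv_f)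
  hence "act \<sigma> (act \<pi> x) = act \<pi> (act \<tau> x)" using comp[OF p\<sigma> p] comp[OF p p\<tau>] by simp
  thus "act \<sigma> (act \<pi> x) = act \<pi> x" using \<open>act \<tau> x = x\<close> by simp
qed

lemma fin_supp_singleton: "fin_supp act x \<Longrightarrow> fin_supp (set_act act) {x}"
  by (simp add: fin_supp_def supports_def set_act_def)

lemma Pow_fs_set_act:
  assumes inv: "invariant_set U act" and XU: "X \<subseteq> U" and p: "perm_A \<pi>"
    and stable: "set_act act \<pi> X = X" and Z: "Z \<in> Pow_fs act X"
  shows "set_act act \<pi> Z \<in> Pow_fs act X"
proof -
  have ZU: "Z \<subseteq> U" using Z XU by (auto simp: Pow_fs_def)
  obtain S where "finite S" "supports (set_act act) S Z" using Z by (auto simp: Pow_fs_def fin_supp_def)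
  hence "finite (\<pi> ` S) \<and> supports (set_act act) (\<pi> ` S) (set_act act \<pi> Z)"
    using supports_act_perm[where act="set_act act"] set_act_comp[OF inv _ _ ZU] p by blast
  moreover have "set_act act \<pi> Z \<subseteq> X" using Z stable by (auto simp: Pow_fs_def set_act_def)
  ultimately show ?thesis by (auto simp: Pow_fs_def fin_supp_def)
qed

lemma set_act_Pow_fs:
  assumes inv: "invariant_set U act" and XU: "X \<subseteq> U" and p: "perm_A \<pi>"
    and stable: "set_act act \<pi> X = X"
  shows "set_act (set_act act) \<pi> (Pow_fs act X) = Pow_fs act X"
proof
  show "set_act (set_act act) \<pi> (Pow_fs act X) \<subseteq> Pow_fs act X"
    using Pow_fs_set_act[OF inv XU p stable] by (auto simp: set_act_def)
  show "Pow_fs act X \<subseteq> set_act (set_act act) \<pi> (Pow_fs act X)"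
  proof
    fix Z assume Z: "Z \<in> Pow_fs act X"
    hence ZU: "Z \<subseteq> U" using XU by (auto simp: Pow_fs_def)
    have "set_act act (inv \<pi>) Z \<in> Pow_fs act X"
      using Pow_fs_set_act[OF inv XU perm_A_inv[OF p] set_act_inv_stable[OF inv p XU stable] Z] .
    moreover have "Z = set_act act \<pi> (set_act act (inv \<pi>) Z)"
      by (rule set_act_act_inv[OF inv p ZU, symmetric])
    ultimately show "Z \<in> set_act (set_act act) \<pi> (Pow_fs act X)"
      unfolding set_act_def[of "set_act act"] by (rule image_eqI[rotated])
  qed
qed

lemma fsm_dedekind_infiniteI:
  assumes g: "fs_map act act D D g" and inj: "inj_on g D" and proper: "g ` D \<subset> D"
  shows "fsm_dedekind_infinite act D"
proof -
  obtain S where "finite S" and S: "\<And>\<pi>. fixes_all \<pi> S \<Longrightarrow>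
      set_act act \<pi> D = D \<and> (\<forall>x\<in>D. g (act \<pi> x) = act \<pi> (g x))"
    using g unfolding fs_map_def by blast
  have image: "set_act act \<pi> (g ` D) = g ` D" if "fixes_all \<pi> S" for \<pi>
  proof -
    have stable: "act \<pi> ` D = D" and equivariant: "\<forall>x\<in>D. g (act \<pi> x) = act \<pi> (g x)"
      using S[OF that] by (auto simp: set_act_def)
    have "act \<pi> ` g ` D = (\<lambda>x. g (act \<pi> x)) ` D"
      unfolding image_image using equivariant by (intro image_cong) simp_all
    also have "\<dots> = g ` act \<pi> ` D" by (simp only: image_image)
    finally show ?thesis using stable by (simp add: set_act_def)
  qed
  have "fin_supp (set_act act) (g ` D)"
    unfolding fin_supp_def supports_def using \<open>finite S\<close> image by blast
  moreover have "fs_map act act D (g ` D) g"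
    unfolding fs_map_def by (intro exI[of _ S]) (simp add: \<open>finite S\<close> S image)
  moreover have "bij_betw g D (g ` D)" using inj by (rule inj_on_imp_bij_betw)
  ultimately show ?thesis
    unfolding fsm_dedekind_infinite_def using proper by blast
qed

lemma set_act_vimage:
  assumes inv: "invariant_set U act" and XU: "X \<subseteq> U" and ZX: "Z \<subseteq> X" and fX: "f ` X \<subseteq> X"
    and p: "perm_A \<pi>" and stable: "act \<pi> ` X = X"
    and equivariant: "\<forall>x\<in>X. f (act \<pi> x) = act \<pi> (f x)"
  shows "act \<pi> ` (X \<inter> f -` Z) = X \<inter> f -` act \<pi> ` Z"
proof
  show "act \<pi> ` (X \<inter> f -` Z) \<subseteq> X \<inter> f -` act \<pi> ` Z"
  proof
    fix y assume "y \<in> act \<pi> ` (X \<inter> f -` Z)"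
    then obtain x where x: "x \<in> X" "f x \<in> Z" and yx: "y = act \<pi> x" by blast
    have "y \<in> X" using x(1) yx stable by blast
    moreover have "f y \<in> act \<pi> ` Z" using equivariant x yx by simp
    ultimately show "y \<in> X \<inter> f -` act \<pi> ` Z" by simp
  qed
  show "X \<inter> f -` act \<pi> ` Z \<subseteq> act \<pi> ` (X \<inter> f -` Z)"
  proof
    fix y assume y: "y \<in> X \<inter> f -` act \<pi> ` Z"
    then obtain x where x: "x \<in> X" and yx: "y = act \<pi> x" using stable by blast
    obtain z where z: "z \<in> Z" and "f y = act \<pi> z" using y by blast
    hence "act \<pi> (f x) = act \<pi> z" using equivariant x yx by simp
    moreover have "f x \<in> U" "z \<in> U" using x z fX ZX XU by auto
    ultimately have "f x = z" by (rule inj_onD[OF invariant_set_inj_on_act[OF inv p]])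
    hence "x \<in> X \<inter> f -` Z" using x z by simp
    thus "y \<in> act \<pi> ` (X \<inter> f -` Z)" using yx by simp
  qed
qed

lemma vimage_Pow_fs:
  assumes inv: "invariant_set U act" and XU: "X \<subseteq> U" and fX: "f ` X \<subseteq> X"
    and f: "fs_map act act X X f" and Z: "Z \<in> Pow_fs act X"
  shows "X \<inter> f -` Z \<in> Pow_fs act X"
proof -
  obtain Sf where "finite Sf" and Sf: "\<And>\<pi>. fixes_all \<pi> Sf \<Longrightarrow>
      set_act act \<pi> X = X \<and> (\<forall>x\<in>X. f (act \<pi> x) = act \<pi> (f x))"
    using f unfolding fs_map_def by blast
  obtain S where "finite S" and S: "supports (set_act act) S Z"
    using Z by (auto simp: Pow_fs_def fin_supp_def)
  have ZX: "Z \<subseteq> X" using Z by (simp add: Pow_fs_def)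
  have "supports (set_act act) (Sf \<union> S) (X \<inter> f -` Z)"
    unfolding supports_def
  proof (intro allI impI)
    fix \<pi> assume fix\<pi>: "fixes_all \<pi> (Sf \<union> S)"
    hence p: "perm_A \<pi>" by (simp add: fixes_all_def)
    have "fixes_all \<pi> Sf" "fixes_all \<pi> S" using fixes_all_subset[OF fix\<pi>] by auto
    hence "act \<pi> ` Z = Z" and "act \<pi> ` (X \<inter> f -` Z) = X \<inter> f -` act \<pi> ` Z"
      using S Sf set_act_vimage[OF inv XU ZX fX p] by (auto simp: supports_def set_act_def)
    thus "set_act act \<pi> (X \<inter> f -` Z) = X \<inter> f -` Z" by (simp add: set_act_def)
  qed
  thus ?thesis using \<open>finite Sf\<close> \<open>finite S\<close> by (auto simp: Pow_fs_def fin_supp_def)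
qed

lemma fs_map_vimage_Pow_fs:
  assumes inv: "invariant_set U act" and XU: "X \<subseteq> U" and fX: "f ` X \<subseteq> X"
    and f: "fs_map act act X X f"
  shows "fs_map (set_act act) (set_act act) (Pow_fs act X) (Pow_fs act X) (\<lambda>Z. X \<inter> f -` Z)"
proof -
  obtain S where "finite S" and S: "\<And>\<pi>. fixes_all \<pi> S \<Longrightarrow>
      set_act act \<pi> X = X \<and> (\<forall>x\<in>X. f (act \<pi> x) = act \<pi> (f x))"
    using f unfolding fs_map_def by blast
  show ?thesis
    unfolding fs_map_def
  proof (intro exI conjI allI impI ballI)
    fix \<pi> assume fix\<pi>: "fixes_all \<pi> S"
    hence p: "perm_A \<pi>" by (simp add: fixes_all_def)
    show "set_act (set_act act) \<pi> (Pow_fs act X) = Pow_fs act X"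
      and "set_act (set_act act) \<pi> (Pow_fs act X) = Pow_fs act X"
      using set_act_Pow_fs[OF inv XU p] S[OF fix\<pi>] by simp_all
    fix Z assume "Z \<in> Pow_fs act X"
    thus "X \<inter> f -` set_act act \<pi> Z = set_act act \<pi> (X \<inter> f -` Z)"
      using set_act_vimage[OF inv XU _ fX p] S[OF fix\<pi>] by (auto simp: set_act_def Pow_fs_def)
  qed (fact \<open>finite S\<close>)
qed

lemma image_Int_vimage_onto:
  assumes onto: "f ` X = X" and ZX: "Z \<subseteq> X"
  shows "f ` (X \<inter> f -` Z) = Z"
proof
  show "f ` (X \<inter> f -` Z) \<subseteq> Z" by auto
  show "Z \<subseteq> f ` (X \<inter> f -` Z)"
  proof
    fix z assume "z \<in> Z"
    then obtain x where "x \<in> X" "z = f x" using onto ZX by (metis imageE subsetD)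
    thus "z \<in> f ` (X \<inter> f -` Z)" using \<open>z \<in> Z\<close> by blast
  qed
qed

lemma inj_on_vimage_Pow: "f ` X = X \<Longrightarrow> inj_on (\<lambda>Z. X \<inter> f -` Z) (Pow X)"
  by (rule inj_on_inverseI[where g="\<lambda>Z. f ` Z"]) (simp add: image_Int_vimage_onto)

lemma singleton_not_vimage:
  "x \<in> X \<Longrightarrow> y \<in> X \<Longrightarrow> x \<noteq> y \<Longrightarrow> f x = f y \<Longrightarrow> {x} \<noteq> X \<inter> f -` Z"
  by (metis IntI Int_iff singletonD singletonI vimage_eq)

lemma Pow_fs_dedekind_infinite_if_not_inj_on:
  assumes inv: "invariant_set U act" and XU: "X \<subseteq> U"
    and onto: "f ` X = X" and f: "fs_map act act X X f" and not_inj: "\<not> inj_on f X"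
  shows "fsm_dedekind_infinite (set_act act) (Pow_fs act X)"
proof (rule fsm_dedekind_infiniteI)
  show "fs_map (set_act act) (set_act act) (Pow_fs act X) (Pow_fs act X) (\<lambda>Z. X \<inter> f -` Z)"
    using fs_map_vimage_Pow_fs[OF inv XU equalityD1[OF onto] f] .
  show "inj_on (\<lambda>Z. X \<inter> f -` Z) (Pow_fs act X)"
    using inj_on_vimage_Pow[OF onto] by (rule inj_on_subset) (auto simp: Pow_fs_def)
  obtain x y where xy: "x \<in> X" "y \<in> X" "x \<noteq> y" "f x = f y" using not_inj by (auto simp: inj_on_def)
  have "fin_supp act x" using inv XU xy(1) by (auto simp: invariant_set_def)
  hence "{x} \<in> Pow_fs act X" using xy(1) by (simp add: Pow_fs_def fin_supp_singleton)
  moreover have "{x} \<notin> (\<lambda>Z. X \<inter> f -` Z) ` Pow_fs act X"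
    using singleton_not_vimage[OF xy] by blast
  moreover have "(\<lambda>Z. X \<inter> f -` Z) ` Pow_fs act X \<subseteq> Pow_fs act X"
    using vimage_Pow_fs[OF inv XU equalityD1[OF onto] f] by blast
  ultimately show "(\<lambda>Z. X \<inter> f -` Z) ` Pow_fs act X \<subset> Pow_fs act X" by blast
qed

theorem mainTheorem13:
  fixes U :: "'x set" and act :: "('atom \<Rightarrow> 'atom) \<Rightarrow> 'x \<Rightarrow> 'x"
    and X :: "'x set" and f :: "'x \<Rightarrow> 'x"
  assumes "infinite (UNIV :: 'atom set)"
    and "invariant_set U act"
    and "X \<subseteq> U"
    and "fin_supp (set_act act) X"
    and "\<not> fsm_dedekind_infinite (set_act act) (Pow_fs act X)"
    and "f ` X = X"
    and "fs_map act act X X f"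
  shows "inj_on f X"
  using Pow_fs_dedekind_infinite_if_not_inj_on[OF assms(2,3,6,7)] assms(5) by blast

end
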